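(* Let $A, E \in \mathbb{R}^{d_1\times d_2}$, let $B = A+E$, and let $d=\max\{d_1,d_2\}$. There exists a numerical constant $C_0>0$ such that for any $1\le r<d$: if $\sigma_r(A)>\sigma_{r+1}(A)$ and $\|E\|\le (\sigma_r(A)-\sigma_{r+1}(A))/2$, then $$\|B_r-A_r\|_{\mathrm F}\le C_0\sqrt{r}\,\|E\|\left(1+\frac{\sqrt{\sigma_{r+1}(A)\sigma_1(A)}}{\sigma_r(A)-\sigma_{r+1}(A)}\right).$$
   Context: For a matrix $M\in\mathbb{R}^{d_1\times d_2}$, $\sigma_1(M)\ge\sigma_2(M)\ge\cdots$ denote its singular values, and $M_r$ denotes its best rank-$r$ approximation (in Frobenius norm), i.e. the truncation of its singular value decomposition to the top $r$ singular values and vectors. $\|\cdot\|$ is the spectral norm and $\|\cdot\|_{\mathrm F}$ the Frobenius norm. *)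

theory Defs
  imports "Jordan_Normal_Form.Matrix"
begin

definition orth_mat :: "nat \<Rightarrow> real mat \<Rightarrow> bool" where
  "orth_mat n U \<longleftrightarrow> U \<in> carrier_mat n n \<and> transpose_mat U * U = 1\<^sub>m n"

definition is_svd :: "nat \<Rightarrow> nat \<Rightarrow> real mat \<Rightarrow> real mat \<Rightarrow> real mat \<Rightarrow> real mat \<Rightarrow> bool" where
  "is_svd d1 d2 M U S V \<longleftrightarrow>
     M \<in> carrier_mat d1 d2 \<and> orth_mat d1 U \<and> orth_mat d2 V \<and>
     S \<in> carrier_mat d1 d2 \<and> diagonal_mat S \<and>
     (\<forall>i < min d1 d2. S $$ (i,i) \<ge> 0) \<and>
     (\<forall>i j. i \<le> j \<longrightarrow> j < min d1 d2 \<longrightarrow> S $$ (j,j) \<le> S $$ (i,i)) \<and>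
     M = U * S * transpose_mat V"

(* singular values, 1-indexed: sigma_i(M) for 1 <= i <= min d1 d2 is the i-th diagonal
   entry of S in an SVD; sigma_i(M) = 0 for i > min d1 d2 (singular values are unique,
   so the choice of SVD does not matter) *)
definition sing_val :: "real mat \<Rightarrow> nat \<Rightarrow> real" where
  "sing_val M i = (let S = (SOME S. \<exists>U V. is_svd (dim_row M) (dim_col M) M U S V) in
     if 1 \<le> i \<and> i \<le> min (dim_row M) (dim_col M) then S $$ (i - 1, i - 1) else 0)"

definition trunc_diag :: "nat \<Rightarrow> real mat \<Rightarrow> real mat" where
  "trunc_diag r S = mat (dim_row S) (dim_col S) (\<lambda>(i,j). if i < r then S $$ (i,j) else 0)"

(* X is a best rank-r approximation M_r of M, i.e. a truncation of an SVD of M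
   to its top r singular values/vectors *)
definition is_rank_trunc :: "real mat \<Rightarrow> nat \<Rightarrow> real mat \<Rightarrow> bool" where
  "is_rank_trunc M r X \<longleftrightarrow> (\<exists>U S V. is_svd (dim_row M) (dim_col M) M U S V \<and>
      X = U * trunc_diag r S * transpose_mat V)"

definition vnorm :: "real vec \<Rightarrow> real" where
  "vnorm x = sqrt (\<Sum>i<dim_vec x. (x $ i)^2)"

definition spec_norm :: "real mat \<Rightarrow> real" where
  "spec_norm M = Sup ({vnorm (M *\<^sub>v x) | x. x \<in> carrier_vec (dim_col M) \<and> vnorm x \<le> 1})"

definition frob_norm :: "real mat \<Rightarrow> real" where
  "frob_norm M = sqrt (\<Sum>i<dim_row M. \<Sum>j<dim_col M. (M $$ (i,j))^2)"

end

theory Submission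
  imports Defs "HOL-Analysis.L2_Norm" "Jordan_Normal_Form.Determinant"
begin

text \<open>
  Write A = U S V^T and A + E = U' S' V'^T with singular values s_j and t_i, and expand
  B_r - A_r in the orthonormal bases u'_i (left singular vectors of A + E) and v_j (right
  singular vectors of A). Its entries are [i < r] t_i b_ij - [j < r] s_j a_ij, where
  a_ij = \<langle>u'_i, u_j\<rangle> and b_ij = \<langle>v'_i, v_j\<rangle>. Testing E against singular vectors gives
  t_i b_ij - s_j a_ij = e_ij and t_i a_ij - s_j b_ij = f_ij, where every row and every
  column of e and of f has squared length at most \<parallel>E\<parallel>^2. For i, j < r the entry is just
  e_ij. If exactly one of i, j is below r, Weyl's inequality puts t_i and s_j on opposite
  sides of the gap \<delta> = \<sigma>_r - \<sigma>_(r+1), at distance at least \<delta>/2, and solving the 2x2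
  system bounds the entry by a multiple of (1 + \<sigma>_(r+1)/\<delta>) |(e_ij, f_ij)|. Only the
  first r rows and columns contribute, whence
  \<parallel>B_r - A_r\<parallel>_F^2 \<le> 40 r \<parallel>E\<parallel>^2 (1 + \<sigma>_(r+1)/\<delta>)^2. This is stronger than the
  claim, as \<sigma>_(r+1) \<le> sqrt (\<sigma>_(r+1) \<sigma>_1).
\<close>

section \<open>Norms and orthonormal bases\<close>

lemma vnorm_eq_L2_set: "vnorm x = L2_set (vec_index x) {..<dim_vec x}"
  unfolding vnorm_def L2_set_def ..

lemma scalar_prod_self: "x \<bullet> x = (\<Sum>i<dim_vec x. (x $ i)^2)" for x :: "real vec"
  unfolding scalar_prod_def by (simp add: power2_eq_square lessThan_atLeast0)

lemma vnorm_eq_sqrt: "vnorm x = sqrt (x \<bullet> x)"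
  unfolding vnorm_def scalar_prod_self ..

lemma vnorm_nonneg: "0 \<le> vnorm x"
  unfolding vnorm_eq_L2_set by (rule L2_set_nonneg)

lemma vnorm_sq: "(vnorm x)^2 = x \<bullet> x"
  unfolding vnorm_eq_sqrt scalar_prod_self by (simp add: sum_nonneg)

lemma vnorm_zero [simp]: "vnorm (0\<^sub>v n) = 0"
  unfolding vnorm_def by simp

lemma vnorm_uminus [simp]: "vnorm (- x) = vnorm x"
  unfolding vnorm_def by simp

lemma vnorm_smult: "vnorm (c \<cdot>\<^sub>v x) = \<bar>c\<bar> * vnorm x"
  unfolding vnorm_def by (simp add: power_mult_distrib real_sqrt_mult flip: sum_distrib_left)

lemma vnorm_eq_0_iff: "x \<in> carrier_vec n \<Longrightarrow> vnorm x = 0 \<longleftrightarrow> x = 0\<^sub>v n"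
  unfolding vnorm_eq_L2_set by (auto simp: L2_set_eq_0_iff)

lemma abs_scalar_prod_le:
  assumes "dim_vec x = dim_vec y"
  shows "\<bar>x \<bullet> y\<bar> \<le> vnorm x * vnorm y"
proof -
  have "\<bar>x \<bullet> y\<bar> \<le> (\<Sum>i<dim_vec y. \<bar>x $ i * y $ i\<bar>)"
    unfolding scalar_prod_def lessThan_atLeast0 by (rule sum_abs)
  also have "\<dots> = (\<Sum>i<dim_vec y. \<bar>x $ i\<bar> * \<bar>y $ i\<bar>)"
    by (simp add: abs_mult)
  also have "\<dots> \<le> vnorm x * vnorm y"
    unfolding vnorm_eq_L2_set assms by (rule L2_set_mult_ineq)
  finally show ?thesis .
qed

lemma vnorm_add_le:
  assumes "x \<in> carrier_vec n" "y \<in> carrier_vec n"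
  shows "vnorm (x + y) \<le> vnorm x + vnorm y"
proof -
  have "vnorm (x + y) = L2_set (\<lambda>i. x $ i + y $ i) {..<n}"
    unfolding vnorm_eq_L2_set using assms by (intro L2_set_cong) auto
  then show ?thesis
    using assms L2_set_triangle_ineq[of "vec_index x" "vec_index y" "{..<n}"]
    by (simp add: vnorm_eq_L2_set)
qed

lemma orth_mat_carrier: "orth_mat n U \<Longrightarrow> U \<in> carrier_mat n n"
  unfolding orth_mat_def by simp

lemma orth_mat_mult_transpose: "orth_mat n U \<Longrightarrow> U * transpose_mat U = 1\<^sub>m n"
  unfolding orth_mat_def by (metis mat_mult_left_right_inverse transpose_carrier_mat)

text \<open>Missing columns are read as zero, so that the left and the right singular vectors of a
  d1 \<times> d2 matrix can both be indexed by all i < max d1 d2.\<close>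

definition col_pad :: "real mat \<Rightarrow> nat \<Rightarrow> real vec" where
  "col_pad U j = (if j < dim_col U then col U j else 0\<^sub>v (dim_row U))"

lemma col_pad_carrier: "U \<in> carrier_mat n m \<Longrightarrow> col_pad U j \<in> carrier_vec n"
  unfolding col_pad_def by auto

lemma vnorm_col_pad_le:
  assumes U: "orth_mat n U"
  shows "vnorm (col_pad U j) \<le> 1"
proof (cases "j < n")
  case True
  have "col U j \<bullet> col U j = (transpose_mat U * U) $$ (j, j)"
    using True orth_mat_carrier[OF U] by simp
  also have "\<dots> = 1"
    using True U by (simp add: orth_mat_def)
  finally show ?thesis
    using True orth_mat_carrier[OF U] by (simp add: col_pad_def vnorm_eq_sqrt)
qed (use orth_mat_carrier[OF U] in \<open>simp add: col_pad_def\<close>)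

lemma parseval_col_pad:
  assumes U: "orth_mat n U" and x: "x \<in> carrier_vec n" and D: "n \<le> D"
  shows "(\<Sum>i<D. (col_pad U i \<bullet> x)^2) = x \<bullet> x"
proof -
  have Uc: "U \<in> carrier_mat n n"
    using U by (rule orth_mat_carrier)
  define y where "y = transpose_mat U *\<^sub>v x"
  have y: "y \<in> carrier_vec n"
    using Uc unfolding y_def by (intro carrier_vecI) simp
  have "(\<Sum>i<D. (col_pad U i \<bullet> x)^2) = (\<Sum>i<n. (col_pad U i \<bullet> x)^2)"
    using D Uc x by (intro sum.mono_neutral_right) (auto simp: col_pad_def)
  also have "\<dots> = y \<bullet> y"
    using Uc x y by (simp add: scalar_prod_self y_def col_pad_def)
  also have "\<dots> = x \<bullet> (U *\<^sub>v y)"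
    using transpose_vec_mult_scalar[OF Uc y x] by (simp add: y_def)
  also have "U *\<^sub>v y = (U * transpose_mat U) *\<^sub>v x"
    using Uc x by (simp add: y_def)
  also have "\<dots> = x"
    using x by (simp add: orth_mat_mult_transpose[OF U])
  finally show ?thesis .
qed

lemma spec_norm_set_bdd_above:
  "bdd_above {vnorm (E *\<^sub>v x) | x. x \<in> carrier_vec (dim_col E) \<and> vnorm x \<le> 1}"
proof (rule bdd_aboveI)
  fix y assume "y \<in> {vnorm (E *\<^sub>v x) | x. x \<in> carrier_vec (dim_col E) \<and> vnorm x \<le> 1}"
  then obtain x where x: "x \<in> carrier_vec (dim_col E)" "vnorm x \<le> 1" and y: "y = vnorm (E *\<^sub>v x)"
    by blast
  have "vnorm (E *\<^sub>v x) \<le> (\<Sum>i<dim_row E. \<bar>(E *\<^sub>v x) $ i\<bar>)"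
    unfolding vnorm_eq_L2_set dim_mult_mat_vec by (rule L2_set_le_sum_abs)
  also have "\<dots> \<le> (\<Sum>i<dim_row E. vnorm (row E i))"
  proof (rule sum_mono)
    fix i assume "i \<in> {..<dim_row E}"
    then have "\<bar>(E *\<^sub>v x) $ i\<bar> = \<bar>row E i \<bullet> x\<bar>"
      by simp
    also have "\<dots> \<le> vnorm (row E i) * vnorm x"
      using x by (intro abs_scalar_prod_le) simp
    also have "\<dots> \<le> vnorm (row E i)"
      using x vnorm_nonneg by (simp add: mult_left_le)
    finally show "\<bar>(E *\<^sub>v x) $ i\<bar> \<le> vnorm (row E i)" .
  qed
  finally show "y \<le> (\<Sum>i<dim_row E. vnorm (row E i))"
    unfolding y .
qed

lemma spec_norm_ge:
  assumes "x \<in> carrier_vec (dim_col E)" "vnorm x \<le> 1"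
  shows "vnorm (E *\<^sub>v x) \<le> spec_norm E"
  unfolding spec_norm_def using assms by (intro cSup_upper spec_norm_set_bdd_above) blast

lemma spec_norm_le:
  assumes "\<And>x. x \<in> carrier_vec (dim_col E) \<Longrightarrow> vnorm x \<le> 1 \<Longrightarrow> vnorm (E *\<^sub>v x) \<le> c"
  shows "spec_norm E \<le> c"
  unfolding spec_norm_def
proof (rule cSup_least)
  show "{vnorm (E *\<^sub>v x) | x. x \<in> carrier_vec (dim_col E) \<and> vnorm x \<le> 1} \<noteq> {}"
    by (auto intro!: exI[of _ "0\<^sub>v (dim_col E)"])
qed (use assms in blast)

lemma spec_norm_nonneg: "0 \<le> spec_norm E"
proof -
  have "vnorm (E *\<^sub>v 0\<^sub>v (dim_col E)) = 0"
    unfolding vnorm_def by simp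
  then show ?thesis
    using spec_norm_ge[of "0\<^sub>v (dim_col E)" E] by simp
qed

lemma spec_norm_bound:
  assumes x: "x \<in> carrier_vec (dim_col E)"
  shows "vnorm (E *\<^sub>v x) \<le> spec_norm E * vnorm x"
proof (cases "vnorm x = 0")
  case True
  then have "x = 0\<^sub>v (dim_col E)"
    using x vnorm_eq_0_iff by blast
  then show ?thesis
    by (simp add: vnorm_def)
next
  case False
  then have pos: "0 < vnorm x"
    using vnorm_nonneg[of x] by simp
  have "vnorm (E *\<^sub>v ((1 / vnorm x) \<cdot>\<^sub>v x)) \<le> spec_norm E"
    using x pos by (intro spec_norm_ge) (auto simp: vnorm_smult)
  moreover have "E *\<^sub>v ((1 / vnorm x) \<cdot>\<^sub>v x) = (1 / vnorm x) \<cdot>\<^sub>v (E *\<^sub>v x)"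
    using x by (intro mult_mat_vec) auto
  ultimately show ?thesis
    using pos by (simp add: vnorm_smult divide_le_eq mult.commute)
qed

lemma spec_norm_transpose_le: "spec_norm (transpose_mat E) \<le> spec_norm E"
proof (rule spec_norm_le)
  fix y assume y: "y \<in> carrier_vec (dim_col (transpose_mat E))" "vnorm y \<le> 1"
  define z where "z = transpose_mat E *\<^sub>v y"
  have z: "z \<in> carrier_vec (dim_col E)"
    unfolding z_def by (intro carrier_vecI) simp
  have "vnorm z * vnorm z = y \<bullet> (E *\<^sub>v z)"
    using transpose_vec_mult_scalar[of E "dim_row E" "dim_col E" z y] y z
    by (simp add: vnorm_sq flip: power2_eq_square z_def)
  also have "\<dots> \<le> vnorm y * vnorm (E *\<^sub>v z)"
    using y abs_scalar_prod_le[of y "E *\<^sub>v z"] by simp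
  also have "\<dots> \<le> vnorm (E *\<^sub>v z)"
    using y vnorm_nonneg by (simp add: mult_left_le_one_le)
  also have "\<dots> \<le> spec_norm E * vnorm z"
    using z by (rule spec_norm_bound)
  finally have "vnorm z * vnorm z \<le> spec_norm E * vnorm z" .
  then show "vnorm (transpose_mat E *\<^sub>v y) \<le> spec_norm E"
    unfolding z_def[symmetric]
    using vnorm_nonneg[of z] spec_norm_nonneg[of E]
    by (cases "vnorm z = 0") (auto dest: mult_right_le_imp_le)
qed

lemma spec_norm_transpose [simp]: "spec_norm (transpose_mat E) = spec_norm E"
  using spec_norm_transpose_le[of E] spec_norm_transpose_le[of "transpose_mat E"] by simp

lemma sq_vnorm_mult_vec_le:
  assumes "x \<in> carrier_vec (dim_col E)" "vnorm x \<le> 1"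
  shows "(E *\<^sub>v x) \<bullet> (E *\<^sub>v x) \<le> (spec_norm E)^2"
  unfolding vnorm_sq[symmetric]
  using spec_norm_ge[OF assms] vnorm_nonneg by (intro power_mono)

section \<open>Diagonal factorisations and coordinates\<close>

text \<open>Counted from 0, whereas sing_val counts from 1.\<close>

definition diag_entry :: "real mat \<Rightarrow> nat \<Rightarrow> real" where
  "diag_entry S j = (if j < min (dim_row S) (dim_col S) then S $$ (j, j) else 0)"

lemma diag_entry_transpose [simp]: "diag_entry (transpose_mat S) j = diag_entry S j"
  unfolding diag_entry_def by (auto simp: min.commute)

lemma diagonal_mat_transpose: "diagonal_mat S \<Longrightarrow> diagonal_mat (transpose_mat S)"
  unfolding diagonal_mat_def by auto

lemma col_diagonal_mat:
  assumes "S \<in> carrier_mat d1 d2" "diagonal_mat S" "j < d2"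
  shows "col S j = diag_entry S j \<cdot>\<^sub>v unit_vec d1 j"
  using assms by (intro eq_vecI) (auto simp: diagonal_mat_def diag_entry_def unit_vec_def)

lemma mult_unit_vec_eq_col:
  fixes U :: "real mat"
  assumes "U \<in> carrier_mat n n" "j < n"
  shows "U *\<^sub>v unit_vec n j = col U j"
proof (rule eq_vecI)
  fix i assume "i < dim_vec (col U j)"
  then have i: "i < n"
    using assms by simp
  have "(U *\<^sub>v unit_vec n j) $ i = row U i \<bullet> unit_vec n j"
    using i assms by simp
  also have "\<dots> = U $$ (i, j)"
    using i assms by (subst scalar_prod_right_unit) auto
  finally show "(U *\<^sub>v unit_vec n j) $ i = col U j $ i"
    using i assms by simp
qed (use assms in simp)

lemma mult_zero_vec: "A \<in> carrier_mat n m \<Longrightarrow> A *\<^sub>v 0\<^sub>v m = (0\<^sub>v n :: real vec)"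
  by (intro eq_vecI) auto

lemma diag_factor_mult_col_pad:
  assumes U: "orth_mat d1 U" and V: "orth_mat d2 V"
    and S: "S \<in> carrier_mat d1 d2" "diagonal_mat S"
  shows "(U * S * transpose_mat V) *\<^sub>v col_pad V j = diag_entry S j \<cdot>\<^sub>v col_pad U j"
proof -
  have Uc: "U \<in> carrier_mat d1 d1" and Vc: "V \<in> carrier_mat d2 d2"
    using U V by (auto intro: orth_mat_carrier)
  show ?thesis
  proof (cases "j < d2")
    case False
    then have "col_pad V j = 0\<^sub>v d2" "diag_entry S j = 0"
      using Vc S by (auto simp: col_pad_def diag_entry_def)
    moreover have "U * S * transpose_mat V \<in> carrier_mat d1 d2"
      using Uc Vc S by auto
    ultimately show ?thesis
      using col_pad_carrier[OF Uc, of j] by (auto simp: mult_zero_vec intro!: eq_vecI)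
  next
    case True
    have "U * S * transpose_mat V * V = U * S * (transpose_mat V * V)"
      using Uc Vc S by (intro assoc_mult_mat) auto
    also have "\<dots> = U * S"
      using V Uc S by (simp add: orth_mat_def)
    finally have XV: "U * S * transpose_mat V * V = U * S" .
    have "(U * S * transpose_mat V) *\<^sub>v col V j = col (U * S * transpose_mat V * V) j"
      using True Uc Vc S by (intro col_mult2[symmetric]) auto
    also have "\<dots> = U *\<^sub>v col S j"
      unfolding XV using True Uc S by (intro col_mult2) auto
    also have "col S j = diag_entry S j \<cdot>\<^sub>v unit_vec d1 j"
      using S True by (rule col_diagonal_mat)
    also have "U *\<^sub>v (diag_entry S j \<cdot>\<^sub>v unit_vec d1 j) = diag_entry S j \<cdot>\<^sub>v col_pad U j"
      using Uc S by (cases "j < d1") (auto simp: mult_mat_vec mult_unit_vec_eq_col col_pad_def diag_entry_def)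
    finally show ?thesis
      using True Vc by (simp add: col_pad_def)
  qed
qed

lemma transpose_diag_factor:
  fixes U S V :: "real mat"
  assumes "U \<in> carrier_mat d1 d1" "S \<in> carrier_mat d1 d2" "V \<in> carrier_mat d2 d2"
  shows "transpose_mat (U * S * transpose_mat V) = V * transpose_mat S * transpose_mat U"
proof -
  have "transpose_mat (U * S * transpose_mat V) = transpose_mat (transpose_mat V) * transpose_mat (U * S)"
    using assms by (intro transpose_mult[of _ d1 d2]) auto
  also have "transpose_mat (U * S) = transpose_mat S * transpose_mat U"
    using assms by (intro transpose_mult[of _ d1 d1]) auto
  finally show ?thesis
    using assms by (simp add: assoc_mult_mat[of V d2 d2 "transpose_mat S" d1 "transpose_mat U" d1])
qed

lemma scalar_prod_diag_factor_left:
  assumes U: "orth_mat d1 U" and V: "orth_mat d2 V"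
    and S: "S \<in> carrier_mat d1 d2" "diagonal_mat S" and y: "y \<in> carrier_vec d2"
  shows "col_pad U i \<bullet> ((U * S * transpose_mat V) *\<^sub>v y) = diag_entry S i * (col_pad V i \<bullet> y)"
proof -
  have Uc: "U \<in> carrier_mat d1 d1" and Vc: "V \<in> carrier_mat d2 d2"
    using U V by (auto intro: orth_mat_carrier)
  have "col_pad U i \<bullet> ((U * S * transpose_mat V) *\<^sub>v y)
      = (transpose_mat (U * S * transpose_mat V) *\<^sub>v col_pad U i) \<bullet> y"
    using Uc Vc S y col_pad_carrier[OF Uc]
    by (intro transpose_vec_mult_scalar[symmetric, of _ d1 d2]) auto
  also have "transpose_mat (U * S * transpose_mat V) = V * transpose_mat S * transpose_mat U"
    using Uc S(1) Vc by (rule transpose_diag_factor)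
  also have "\<dots> *\<^sub>v col_pad U i = diag_entry S i \<cdot>\<^sub>v col_pad V i"
    using diag_factor_mult_col_pad[OF V U _ diagonal_mat_transpose[OF S(2)]] S by simp
  finally show ?thesis
    using y col_pad_carrier[OF Vc] by simp
qed

lemma scalar_prod_diag_factor_right:
  assumes U: "orth_mat d1 U" and V: "orth_mat d2 V"
    and S: "S \<in> carrier_mat d1 d2" "diagonal_mat S" and x: "x \<in> carrier_vec d1"
  shows "x \<bullet> ((U * S * transpose_mat V) *\<^sub>v col_pad V j) = diag_entry S j * (x \<bullet> col_pad U j)"
  using diag_factor_mult_col_pad[OF U V S] x col_pad_carrier[OF orth_mat_carrier[OF U]] by simp

lemma is_svd_diag_entry_nonneg: "is_svd d1 d2 M U S V \<Longrightarrow> 0 \<le> diag_entry S j"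
  unfolding is_svd_def diag_entry_def by auto

lemma is_svd_diag_entry_antimono: "is_svd d1 d2 M U S V \<Longrightarrow> antimono (diag_entry S)"
  unfolding is_svd_def diag_entry_def by (intro antimonoI) auto

lemma trunc_diag_carrier: "S \<in> carrier_mat d1 d2 \<Longrightarrow> trunc_diag r S \<in> carrier_mat d1 d2"
  unfolding trunc_diag_def by auto

lemma diagonal_mat_trunc_diag: "diagonal_mat S \<Longrightarrow> diagonal_mat (trunc_diag r S)"
  unfolding trunc_diag_def diagonal_mat_def by auto

lemma diag_entry_trunc_diag: "diag_entry (trunc_diag r S) j = (if j < r then diag_entry S j else 0)"
  unfolding diag_entry_def trunc_diag_def by auto

definition basis_coeff :: "real mat \<Rightarrow> real mat \<Rightarrow> real mat \<Rightarrow> nat \<Rightarrow> nat \<Rightarrow> real" where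
  "basis_coeff U V X i j = col_pad U i \<bullet> (X *\<^sub>v col_pad V j)"

lemma frob_norm_sq_eq_sum_basis_coeff:
  assumes X: "X \<in> carrier_mat d1 d2" and U: "orth_mat d1 U" and V: "orth_mat d2 V"
    and D: "d1 \<le> D" "d2 \<le> D"
  shows "(frob_norm X)^2 = (\<Sum>i<D. \<Sum>j<D. (basis_coeff U V X i j)^2)"
proof -
  have Vc: "V \<in> carrier_mat d2 d2"
    using V by (rule orth_mat_carrier)
  have "(\<Sum>i<D. \<Sum>j<D. (basis_coeff U V X i j)^2)
      = (\<Sum>j<D. (X *\<^sub>v col_pad V j) \<bullet> (X *\<^sub>v col_pad V j))"
    unfolding basis_coeff_def using X col_pad_carrier[OF Vc]
    by (subst sum.swap) (intro sum.cong refl parseval_col_pad[OF U _ D(1)], auto)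
  also have "\<dots> = (\<Sum>j<D. \<Sum>k<d1. (col_pad V j \<bullet> row X k)^2)"
    using X col_pad_carrier[OF Vc] by (intro sum.cong refl) (auto simp: scalar_prod_self comm_scalar_prod[of _ d2])
  also have "\<dots> = (\<Sum>k<d1. row X k \<bullet> row X k)"
    using X by (subst sum.swap) (intro sum.cong refl parseval_col_pad[OF V _ D(2)], auto)
  also have "\<dots> = (frob_norm X)^2"
    using X by (simp add: frob_norm_def scalar_prod_self sum_nonneg)
  finally show ?thesis ..
qed

lemma sum_sq_basis_coeff_le:
  assumes U: "orth_mat d1 U" and V: "orth_mat d2 V" and E: "E \<in> carrier_mat d1 d2"
    and D: "d1 \<le> D" "d2 \<le> D"
  shows "(\<Sum>i<D. (basis_coeff U V E i j)^2) \<le> (spec_norm E)^2"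
    and "(\<Sum>j<D. (basis_coeff U V E i j)^2) \<le> (spec_norm E)^2"
proof -
  have Uc: "U \<in> carrier_mat d1 d1" and Vc: "V \<in> carrier_mat d2 d2"
    using U V by (auto intro: orth_mat_carrier)
  have "(\<Sum>i<D. (basis_coeff U V E i j)^2) = (E *\<^sub>v col_pad V j) \<bullet> (E *\<^sub>v col_pad V j)"
    unfolding basis_coeff_def using E col_pad_carrier[OF Vc] by (intro parseval_col_pad[OF U _ D(1)]) auto
  also have "\<dots> \<le> (spec_norm E)^2"
    using E col_pad_carrier[OF Vc] vnorm_col_pad_le[OF V] by (intro sq_vnorm_mult_vec_le) auto
  finally show "(\<Sum>i<D. (basis_coeff U V E i j)^2) \<le> (spec_norm E)^2" .
  define y where "y = transpose_mat E *\<^sub>v col_pad U i"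
  have y: "y \<in> carrier_vec d2"
    using E unfolding y_def by (intro carrier_vecI) simp
  have "basis_coeff U V E i j = col_pad V j \<bullet> y" for j
    unfolding basis_coeff_def y_def using E col_pad_carrier[OF Uc] col_pad_carrier[OF Vc] y
    by (subst comm_scalar_prod[of _ d2]) (auto simp: transpose_vec_mult_scalar[of _ d1 d2])
  then have "(\<Sum>j<D. (basis_coeff U V E i j)^2) = y \<bullet> y"
    using parseval_col_pad[OF V y D(2)] by simp
  also have "\<dots> \<le> (spec_norm (transpose_mat E))^2"
    unfolding y_def using E col_pad_carrier[OF Uc] vnorm_col_pad_le[OF U]
    by (intro sq_vnorm_mult_vec_le) auto
  finally show "(\<Sum>j<D. (basis_coeff U V E i j)^2) \<le> (spec_norm E)^2"
    by simp
qed

section \<open>Weyl's inequality for singular values\<close>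

lemma is_svd_mult_vec_sq:
  assumes M: "is_svd d1 d2 M U S V" and x: "x \<in> carrier_vec d2" and D: "d1 \<le> D"
  shows "(M *\<^sub>v x) \<bullet> (M *\<^sub>v x) = (\<Sum>i<D. (diag_entry S i * (col_pad V i \<bullet> x))^2)"
proof -
  have U: "orth_mat d1 U" and V: "orth_mat d2 V" and S: "S \<in> carrier_mat d1 d2" "diagonal_mat S"
    and M_eq: "M = U * S * transpose_mat V"
    using M unfolding is_svd_def by auto
  have "M *\<^sub>v x \<in> carrier_vec d1"
    using M x unfolding is_svd_def by auto
  then have "(M *\<^sub>v x) \<bullet> (M *\<^sub>v x) = (\<Sum>i<D. (col_pad U i \<bullet> (M *\<^sub>v x))^2)"
    using parseval_col_pad[OF U _ D] by simp
  also have "\<dots> = (\<Sum>i<D. (diag_entry S i * (col_pad V i \<bullet> x))^2)"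
    unfolding M_eq using scalar_prod_diag_factor_left[OF U V S x] by simp
  finally show ?thesis .
qed

lemma is_svd_vnorm_mult_ge:
  assumes M: "is_svd d1 d2 M U S V" and x: "x \<in> carrier_vec d2"
    and orth: "\<And>i. k < i \<Longrightarrow> col_pad V i \<bullet> x = 0"
  shows "diag_entry S k * vnorm x \<le> vnorm (M *\<^sub>v x)"
proof -
  define D where "D = max d1 d2"
  have V: "orth_mat d2 V"
    using M unfolding is_svd_def by auto
  have "(diag_entry S k * vnorm x)^2 = (diag_entry S k)^2 * (\<Sum>i<D. (col_pad V i \<bullet> x)^2)"
    using parseval_col_pad[OF V x, of D] by (simp add: D_def power_mult_distrib vnorm_sq)
  also have "\<dots> = (\<Sum>i<D. (diag_entry S k * (col_pad V i \<bullet> x))^2)"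
    unfolding sum_distrib_left power_mult_distrib ..
  also have "\<dots> \<le> (\<Sum>i<D. (diag_entry S i * (col_pad V i \<bullet> x))^2)"
  proof (rule sum_mono)
    fix i
    have "diag_entry S k \<le> diag_entry S i" if "i \<le> k"
      using that is_svd_diag_entry_antimono[OF M] by (auto dest: antimonoD)
    then show "(diag_entry S k * (col_pad V i \<bullet> x))^2 \<le> (diag_entry S i * (col_pad V i \<bullet> x))^2"
      using orth[of i] is_svd_diag_entry_nonneg[OF M, of k]
      by (cases "k < i") (auto simp: power_mult_distrib intro!: mult_right_mono power_mono)
  qed
  also have "\<dots> = (vnorm (M *\<^sub>v x))^2"
    using is_svd_mult_vec_sq[OF M x, of D] by (simp add: D_def vnorm_sq)
  finally show ?thesis
    using vnorm_nonneg by (rule power2_le_imp_le)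
qed

lemma is_svd_vnorm_mult_le:
  assumes M: "is_svd d1 d2 M U S V" and x: "x \<in> carrier_vec d2"
    and orth: "\<And>i. i < k \<Longrightarrow> col_pad V i \<bullet> x = 0"
  shows "vnorm (M *\<^sub>v x) \<le> diag_entry S k * vnorm x"
proof -
  define D where "D = max d1 d2"
  have V: "orth_mat d2 V"
    using M unfolding is_svd_def by auto
  have "(vnorm (M *\<^sub>v x))^2 = (\<Sum>i<D. (diag_entry S i * (col_pad V i \<bullet> x))^2)"
    using is_svd_mult_vec_sq[OF M x, of D] by (simp add: D_def vnorm_sq)
  also have "\<dots> \<le> (\<Sum>i<D. (diag_entry S k * (col_pad V i \<bullet> x))^2)"
  proof (rule sum_mono)
    fix i
    have "diag_entry S i \<le> diag_entry S k" if "k \<le> i"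
      using that is_svd_diag_entry_antimono[OF M] by (auto dest: antimonoD)
    then show "(diag_entry S i * (col_pad V i \<bullet> x))^2 \<le> (diag_entry S k * (col_pad V i \<bullet> x))^2"
      using orth[of i] is_svd_diag_entry_nonneg[OF M, of i]
      by (cases "i < k") (auto simp: power_mult_distrib intro!: mult_right_mono power_mono)
  qed
  also have "\<dots> = (diag_entry S k)^2 * (\<Sum>i<D. (col_pad V i \<bullet> x)^2)"
    unfolding sum_distrib_left power_mult_distrib ..
  also have "\<dots> = (diag_entry S k * vnorm x)^2"
    using parseval_col_pad[OF V x, of D] by (simp add: D_def power_mult_distrib vnorm_sq)
  finally show ?thesis
    by (rule power2_le_imp_le) (simp add: is_svd_diag_entry_nonneg[OF M] vnorm_nonneg)
qed

lemma exists_nonzero_orthogonal_vec: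
  fixes w :: "nat \<Rightarrow> real vec"
  assumes w: "\<And>i. i < k \<Longrightarrow> w i \<in> carrier_vec n" and k: "k < n"
  shows "\<exists>x \<in> carrier_vec n. x \<noteq> 0\<^sub>v n \<and> (\<forall>i<k. w i \<bullet> x = 0)"
proof -
  define c where "c i = (if i < k then w i else 0\<^sub>v n)" for i
  \<comment> \<open>the rows w i, padded by a zero row, form a singular square matrix\<close>
  define W where "W = mat\<^sub>r n n (\<lambda>i. if i = k then 0\<^sub>v n else c i)"
  have c: "c \<in> {0..<n} \<rightarrow> carrier_vec n"
    using w by (auto simp: c_def)
  have "det W = 0"
    unfolding W_def using k c by (rule det_row_0)
  then obtain x where x: "x \<in> carrier_vec n" "x \<noteq> 0\<^sub>v n" "W *\<^sub>v x = 0\<^sub>v n"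
    using det_0_iff_vec_prod_zero_field[of W n] by (auto simp: W_def)
  have "w i \<bullet> x = 0" if i: "i < k" for i
  proof -
    have "w i \<bullet> x = (W *\<^sub>v x) $ i"
      using i k w[OF i] by (simp add: W_def c_def)
    then show ?thesis
      using x(3) i k by simp
  qed
  then show ?thesis
    using x by blast
qed

lemma weyl_diag_entry_le:
  assumes M: "is_svd d1 d2 M U S V" and N: "is_svd d1 d2 N U' S' V'" and k: "k < min d1 d2"
    and bound: "\<And>x. x \<in> carrier_vec d2 \<Longrightarrow> vnorm ((M - N) *\<^sub>v x) \<le> c * vnorm x"
  shows "diag_entry S k \<le> diag_entry S' k + c"
proof -
  have Mc: "M \<in> carrier_mat d1 d2" and Nc: "N \<in> carrier_mat d1 d2"
    and Vc: "V \<in> carrier_mat d2 d2" and V'c: "V' \<in> carrier_mat d2 d2"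
    using M N unfolding is_svd_def orth_mat_def by auto
  \<comment> \<open>Courant--Fischer: x must be orthogonal to v'_i for i < k and to v_i for i > k,
    which are d2 - 1 vectors\<close>
  define w where "w i = (if i < k then col_pad V' i else col_pad V (Suc i))" for i
  have "w i \<in> carrier_vec d2" for i
    using col_pad_carrier[OF Vc] col_pad_carrier[OF V'c] by (simp add: w_def)
  then obtain x where x: "x \<in> carrier_vec d2" "x \<noteq> 0\<^sub>v d2" and orth: "\<forall>i<d2 - 1. w i \<bullet> x = 0"
    using exists_nonzero_orthogonal_vec[of "d2 - 1" w d2] k by auto
  have orth_V: "col_pad V i \<bullet> x = 0" if "k < i" for i
  proof (cases "i < d2")
    case True
    have "\<not> i - 1 < k" "Suc (i - 1) = i"
      using that by auto
    then have "w (i - 1) = col_pad V i"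
      unfolding w_def by presburger
    moreover have "w (i - 1) \<bullet> x = 0"
      using that True orth by auto
    ultimately show ?thesis
      by simp
  next
    case False
    then show ?thesis
      using Vc x by (simp add: col_pad_def)
  qed
  have orth_V': "col_pad V' i \<bullet> x = 0" if "i < k" for i
  proof -
    have "i < d2 - 1"
      using that k by auto
    then have "w i \<bullet> x = 0"
      using orth by blast
    then show ?thesis
      using that by (simp add: w_def)
  qed
  have "diag_entry S k * vnorm x \<le> vnorm (M *\<^sub>v x)"
    using orth_V by (rule is_svd_vnorm_mult_ge[OF M x(1)])
  also have "M *\<^sub>v x = N *\<^sub>v x + (M - N) *\<^sub>v x"
    using Mc Nc x by (auto simp: minus_mult_distrib_mat_vec)
  also have "vnorm \<dots> \<le> vnorm (N *\<^sub>v x) + vnorm ((M - N) *\<^sub>v x)"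
    using Mc Nc x minus_carrier_mat[OF Nc, of M] by (intro vnorm_add_le[of _ d1]) auto
  also have "\<dots> \<le> diag_entry S' k * vnorm x + c * vnorm x"
    using orth_V' by (intro add_mono is_svd_vnorm_mult_le[OF N x(1)] bound x(1))
  finally have "diag_entry S k * vnorm x \<le> (diag_entry S' k + c) * vnorm x"
    by (simp add: algebra_simps)
  moreover have "0 < vnorm x"
    using x vnorm_eq_0_iff vnorm_nonneg by (metis order_le_less)
  ultimately show ?thesis
    by simp
qed

lemma weyl_perturbation:
  assumes A: "is_svd d1 d2 A U S V" and B: "is_svd d1 d2 (A + E) U' S' V'"
    and E: "E \<in> carrier_mat d1 d2" and k: "k < min d1 d2"
  shows "\<bar>diag_entry S k - diag_entry S' k\<bar> \<le> spec_norm E"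
proof -
  have Ac: "A \<in> carrier_mat d1 d2"
    using A unfolding is_svd_def by auto
  have E_bound: "vnorm (E *\<^sub>v x) \<le> spec_norm E * vnorm x" if "x \<in> carrier_vec d2" for x
    using E that by (intro spec_norm_bound) auto
  have "(A - (A + E)) *\<^sub>v x = - (E *\<^sub>v x)" and "((A + E) - A) *\<^sub>v x = E *\<^sub>v x"
    if x: "x \<in> carrier_vec d2" for x
  proof -
    have "(A + E) *\<^sub>v x = A *\<^sub>v x + E *\<^sub>v x"
      using Ac E x by (rule add_mult_distrib_mat_vec)
    moreover have "(A - (A + E)) *\<^sub>v x = A *\<^sub>v x - (A + E) *\<^sub>v x"
      and "((A + E) - A) *\<^sub>v x = (A + E) *\<^sub>v x - A *\<^sub>v x"
      using Ac E x by (auto intro: minus_mult_distrib_mat_vec)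
    ultimately show "(A - (A + E)) *\<^sub>v x = - (E *\<^sub>v x)" and "((A + E) - A) *\<^sub>v x = E *\<^sub>v x"
      using Ac E x by (auto intro!: eq_vecI)
  qed
  then have "diag_entry S k \<le> diag_entry S' k + spec_norm E"
    and "diag_entry S' k \<le> diag_entry S k + spec_norm E"
    using E_bound by (auto intro: weyl_diag_entry_le[OF A B k] weyl_diag_entry_le[OF B A k])
  then show ?thesis
    by linarith
qed

lemma is_svd_diag_entry_unique:
  assumes M: "is_svd d1 d2 M U S V" and M': "is_svd d1 d2 M U' S' V'"
  shows "diag_entry S' k = diag_entry S k"
proof (cases "k < min d1 d2")
  case True
  have Mc: "M \<in> carrier_mat d1 d2"
    using M unfolding is_svd_def by auto
  have "(M - M) *\<^sub>v x = 0\<^sub>v d1" if "x \<in> carrier_vec d2" for x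
    using Mc that by (intro eq_vecI) (auto simp: scalar_prod_def)
  then have bound: "vnorm ((M - M) *\<^sub>v x) \<le> 0 * vnorm x" if "x \<in> carrier_vec d2" for x
    using that by simp
  have "diag_entry S k \<le> diag_entry S' k + 0"
    using M M' True bound by (rule weyl_diag_entry_le)
  moreover have "diag_entry S' k \<le> diag_entry S k + 0"
    using M' M True bound by (rule weyl_diag_entry_le)
  ultimately show ?thesis
    by simp
next
  case False
  then show ?thesis
    using M M' unfolding is_svd_def diag_entry_def by auto
qed

lemma sing_val_eq_diag_entry:
  assumes M: "is_svd d1 d2 M U S V"
  shows "sing_val M (Suc k) = diag_entry S k"
proof -
  have dims: "dim_row M = d1" "dim_col M = d2"
    using M unfolding is_svd_def by auto
  define S0 where "S0 = (SOME S. \<exists>U V. is_svd (dim_row M) (dim_col M) M U S V)"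
  have "\<exists>S U V. is_svd (dim_row M) (dim_col M) M U S V"
    using M unfolding dims by blast
  then have "\<exists>U V. is_svd (dim_row M) (dim_col M) M U S0 V"
    unfolding S0_def by (rule someI_ex)
  then obtain U0 V0 where M0: "is_svd d1 d2 M U0 S0 V0"
    unfolding dims by blast
  have S0c: "S0 \<in> carrier_mat d1 d2"
    using M0 unfolding is_svd_def by auto
  have "sing_val M (Suc k) = (if Suc k \<le> min d1 d2 then S0 $$ (k, k) else 0)"
    unfolding sing_val_def Let_def S0_def dims by simp
  also have "\<dots> = diag_entry S0 k"
    using S0c by (simp add: diag_entry_def)
  also have "\<dots> = diag_entry S k"
    by (rule is_svd_diag_entry_unique[OF M M0])
  finally show ?thesis .
qed

section \<open>Perturbation of truncated singular value decompositions\<close>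

lemma svd_perturbation_coupling:
  assumes A: "is_svd d1 d2 A U S V" and B: "is_svd d1 d2 (A + E) U' S' V'"
    and E: "E \<in> carrier_mat d1 d2"
  shows "diag_entry S' i * (col_pad V' i \<bullet> col_pad V j) - diag_entry S j * (col_pad U' i \<bullet> col_pad U j)
      = basis_coeff U' V E i j"
    and "diag_entry S' i * (col_pad U' i \<bullet> col_pad U j) - diag_entry S j * (col_pad V' i \<bullet> col_pad V j)
      = basis_coeff U V' E j i"
proof -
  have U: "orth_mat d1 U" and V: "orth_mat d2 V" and S: "S \<in> carrier_mat d1 d2" "diagonal_mat S"
    and A_eq: "A = U * S * transpose_mat V" and Ac: "A \<in> carrier_mat d1 d2"
    using A unfolding is_svd_def by auto
  have U': "orth_mat d1 U'" and V': "orth_mat d2 V'" and S': "S' \<in> carrier_mat d1 d2" "diagonal_mat S'"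
    and B_eq: "A + E = U' * S' * transpose_mat V'"
    using B unfolding is_svd_def by auto
  have u: "col_pad U j \<in> carrier_vec d1" "col_pad U' i \<in> carrier_vec d1"
    and v: "col_pad V j \<in> carrier_vec d2" "col_pad V' i \<in> carrier_vec d2"
    using U U' V V' by (auto intro: col_pad_carrier orth_mat_carrier)
  have split: "x \<bullet> ((A + E) *\<^sub>v y) = x \<bullet> (A *\<^sub>v y) + x \<bullet> (E *\<^sub>v y)"
    if "x \<in> carrier_vec d1" "y \<in> carrier_vec d2" for x y
    using Ac E that by (simp add: add_mult_distrib_mat_vec scalar_prod_add_distrib[of _ d1])
  have "col_pad U' i \<bullet> ((A + E) *\<^sub>v col_pad V j) = diag_entry S' i * (col_pad V' i \<bullet> col_pad V j)"
    unfolding B_eq using U' V' S' v(1) by (rule scalar_prod_diag_factor_left)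
  moreover have "col_pad U' i \<bullet> (A *\<^sub>v col_pad V j) = diag_entry S j * (col_pad U' i \<bullet> col_pad U j)"
    unfolding A_eq using U V S u(2) by (rule scalar_prod_diag_factor_right)
  ultimately show "diag_entry S' i * (col_pad V' i \<bullet> col_pad V j) - diag_entry S j * (col_pad U' i \<bullet> col_pad U j)
      = basis_coeff U' V E i j"
    using split[OF u(2) v(1)] by (simp add: basis_coeff_def)
  have "col_pad U j \<bullet> ((A + E) *\<^sub>v col_pad V' i) = diag_entry S' i * (col_pad U' i \<bullet> col_pad U j)"
    unfolding B_eq using scalar_prod_diag_factor_right[OF U' V' S' u(1)] u by (simp add: comm_scalar_prod[of _ d1])
  moreover have "col_pad U j \<bullet> (A *\<^sub>v col_pad V' i) = diag_entry S j * (col_pad V' i \<bullet> col_pad V j)"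
    unfolding A_eq using scalar_prod_diag_factor_left[OF U V S v(2)] v by (simp add: comm_scalar_prod[of _ d2])
  ultimately show "diag_entry S' i * (col_pad U' i \<bullet> col_pad U j) - diag_entry S j * (col_pad V' i \<bullet> col_pad V j)
      = basis_coeff U V' E j i"
    using split[OF u(1) v(2)] by (simp add: basis_coeff_def)
qed

lemma basis_coeff_trunc_diff:
  assumes A: "is_svd d1 d2 A U S V" and B: "is_svd d1 d2 B U' S' V'"
  shows "basis_coeff U' V (U' * trunc_diag r S' * transpose_mat V' - U * trunc_diag r S * transpose_mat V) i j
    = (if i < r then diag_entry S' i else 0) * (col_pad V' i \<bullet> col_pad V j)
      - (if j < r then diag_entry S j else 0) * (col_pad U' i \<bullet> col_pad U j)"
proof -
  have U: "orth_mat d1 U" and V: "orth_mat d2 V" and S: "S \<in> carrier_mat d1 d2" "diagonal_mat S"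
    using A unfolding is_svd_def by auto
  have U': "orth_mat d1 U'" and V': "orth_mat d2 V'" and S': "S' \<in> carrier_mat d1 d2" "diagonal_mat S'"
    using B unfolding is_svd_def by auto
  have T: "trunc_diag r S \<in> carrier_mat d1 d2" "diagonal_mat (trunc_diag r S)"
    and T': "trunc_diag r S' \<in> carrier_mat d1 d2" "diagonal_mat (trunc_diag r S')"
    using S S' by (auto intro: trunc_diag_carrier diagonal_mat_trunc_diag)
  have Uc: "U \<in> carrier_mat d1 d1" "U' \<in> carrier_mat d1 d1" and Vc: "V \<in> carrier_mat d2 d2" "V' \<in> carrier_mat d2 d2"
    using U U' V V' by (auto intro: orth_mat_carrier)
  define Ar where "Ar = U * trunc_diag r S * transpose_mat V"
  define Br where "Br = U' * trunc_diag r S' * transpose_mat V'"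
  have Arc: "Ar \<in> carrier_mat d1 d2" and Brc: "Br \<in> carrier_mat d1 d2"
    using Uc Vc T T' by (auto simp: Ar_def Br_def)
  have u: "col_pad U' i \<in> carrier_vec d1" and v: "col_pad V j \<in> carrier_vec d2"
    using Uc Vc by (auto intro: col_pad_carrier)
  have "basis_coeff U' V (Br - Ar) i j = col_pad U' i \<bullet> (Br *\<^sub>v col_pad V j) - col_pad U' i \<bullet> (Ar *\<^sub>v col_pad V j)"
    unfolding basis_coeff_def using Arc Brc u v
    by (simp add: minus_mult_distrib_mat_vec scalar_prod_minus_distrib[of _ d1])
  also have "col_pad U' i \<bullet> (Br *\<^sub>v col_pad V j) = (if i < r then diag_entry S' i else 0) * (col_pad V' i \<bullet> col_pad V j)"
    unfolding Br_def using scalar_prod_diag_factor_left[OF U' V' T' v] by (simp add: diag_entry_trunc_diag)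
  also have "col_pad U' i \<bullet> (Ar *\<^sub>v col_pad V j) = (if j < r then diag_entry S j else 0) * (col_pad U' i \<bullet> col_pad U j)"
    unfolding Ar_def using scalar_prod_diag_factor_right[OF U V T u] by (simp add: diag_entry_trunc_diag)
  finally show ?thesis
    unfolding Ar_def Br_def .
qed

lemma coupled_system_sq_le:
  fixes \<tau> \<sigma> a b e f :: real
  assumes e: "\<tau> * b - \<sigma> * a = e" and f: "\<tau> * a - \<sigma> * b = f"
    and nonneg: "0 \<le> \<tau>" "0 \<le> \<sigma>"
  shows "(\<tau> - \<sigma>)^2 * (a^2 + b^2) \<le> e^2 + f^2"
proof -
  have plus: "(\<tau> - \<sigma>) * (a + b) = e + f" and minus: "(\<tau> + \<sigma>) * (a - b) = f - e"
    using e f by (simp_all add: algebra_simps)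
  have "(\<tau> - \<sigma>)^2 \<le> (\<tau> + \<sigma>)^2"
    using nonneg by (simp add: power2_eq_square algebra_simps)
  then have "(\<tau> - \<sigma>)^2 * (a - b)^2 \<le> (f - e)^2"
    using mult_right_mono[of "(\<tau> - \<sigma>)^2" "(\<tau> + \<sigma>)^2" "(a - b)^2"]
    by (simp flip: minus power_mult_distrib)
  moreover have "(\<tau> - \<sigma>)^2 * (a + b)^2 = (e + f)^2"
    by (simp flip: plus power_mult_distrib)
  ultimately have "(\<tau> - \<sigma>)^2 * ((a + b)^2 + (a - b)^2) \<le> (e + f)^2 + (f - e)^2"
    by (simp add: distrib_left)
  then show ?thesis
    by (simp add: power2_eq_square algebra_simps)
qed

lemma trunc_entry_sq_le:
  fixes \<tau> \<sigma> a b e f L :: real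
  assumes e: "\<tau> * b - \<sigma> * a = e" and f: "\<tau> * a - \<sigma> * b = f"
    and nonneg: "0 \<le> \<tau>" "0 \<le> \<sigma>"
    and sep: "P \<noteq> Q \<Longrightarrow> \<sigma> \<le> L * \<bar>\<tau> - \<sigma>\<bar>"
  shows "((if P then \<tau> else 0) * b - (if Q then \<sigma> else 0) * a)^2
    \<le> (if P \<or> Q then (2 + 2 * L^2) * (e^2 + f^2) else 0)"
proof -
  have off_diag: "(\<sigma> * a)^2 \<le> L^2 * (e^2 + f^2)" if "P \<noteq> Q"
  proof -
    have "\<sigma>^2 \<le> (L * \<bar>\<tau> - \<sigma>\<bar>)^2"
      using sep[OF that] nonneg by (intro power_mono) auto
    then have "(\<sigma> * a)^2 \<le> L^2 * ((\<tau> - \<sigma>)^2 * a^2)"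
      using mult_right_mono[of "\<sigma>^2" _ "a^2"] by (simp add: power_mult_distrib mult.assoc) (metis mult.assoc zero_le_power2)
    also have "\<dots> \<le> L^2 * (e^2 + f^2)"
      using coupled_system_sq_le[OF e f nonneg]
      by (intro mult_left_mono) (auto simp: distrib_left intro: order_trans[rotated])
    finally show ?thesis .
  qed
  have ef: "0 \<le> e^2 + f^2" "e^2 \<le> e^2 + f^2"
    by simp_all
  consider "P" "Q" | "P" "\<not> Q" | "\<not> P" "Q" | "\<not> P" "\<not> Q"
    by blast
  then show ?thesis
  proof cases
    case 1
    then show ?thesis
      using e ef by (simp add: algebra_simps)
  next
    case 2
    have sa: "(\<sigma> * a)^2 \<le> L^2 * (e^2 + f^2)"
      using 2 by (intro off_diag) simp
    have "((if P then \<tau> else 0) * b - (if Q then \<sigma> else 0) * a)^2 = (e + \<sigma> * a)^2"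
      using 2 e by (simp add: algebra_simps)
    also have "\<dots> \<le> 2 * e^2 + 2 * (\<sigma> * a)^2"
      using sum_squares_bound[of e "\<sigma> * a"] by (simp add: power2_eq_square algebra_simps)
    also have "\<dots> \<le> 2 * (e^2 + f^2) + 2 * (L^2 * (e^2 + f^2))"
      using sa by (intro add_mono) simp_all
    finally show ?thesis
      using 2 by (simp add: algebra_simps)
  next
    case 3
    have "((if P then \<tau> else 0) * b - (if Q then \<sigma> else 0) * a)^2 = (\<sigma> * a)^2"
      using 3 by simp
    also have "\<dots> \<le> L^2 * (e^2 + f^2)"
      using 3 by (intro off_diag) simp
    also have "\<dots> \<le> (2 + 2 * L^2) * (e^2 + f^2)"
      using ef by (intro mult_right_mono) auto
    finally show ?thesis
      using 3 by simp
  next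
    case 4
    then show ?thesis
      by simp
  qed
qed

lemma sum_lessThan_if_less:
  fixes g :: "nat \<Rightarrow> real"
  assumes "r \<le> D"
  shows "(\<Sum>i<D. if i < r then g i else 0) = (\<Sum>i<r. g i)"
proof -
  have "(\<Sum>i<D. if i < r then g i else 0) = (\<Sum>i<r. if i < r then g i else 0)"
    using assms by (intro sum.mono_neutral_right) auto
  then show ?thesis
    by simp
qed

lemma sum_first_rows_or_cols_le:
  fixes w :: "nat \<Rightarrow> nat \<Rightarrow> real"
  assumes nonneg: "\<And>i j. 0 \<le> w i j"
    and rows: "\<And>i. (\<Sum>j<D. w i j) \<le> W" and cols: "\<And>j. (\<Sum>i<D. w i j) \<le> W"
    and r: "r \<le> D"
  shows "(\<Sum>i<D. \<Sum>j<D. if i < r \<or> j < r then w i j else 0) \<le> 2 * real r * W"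
proof -
  have row_part: "(\<Sum>i<D. \<Sum>j<D. if i < r then w i j else 0) \<le> real r * W"
  proof -
    have "(\<Sum>i<D. \<Sum>j<D. if i < r then w i j else 0) = (\<Sum>i<D. if i < r then \<Sum>j<D. w i j else 0)"
      by (rule sum.cong) auto
    also have "\<dots> = (\<Sum>i<r. \<Sum>j<D. w i j)"
      using r by (rule sum_lessThan_if_less)
    also have "\<dots> \<le> (\<Sum>i<r. W)"
      using rows by (intro sum_mono)
    finally show ?thesis
      by simp
  qed
  have col_part: "(\<Sum>i<D. \<Sum>j<D. if j < r then w i j else 0) \<le> real r * W"
  proof -
    have "(\<Sum>i<D. \<Sum>j<D. if j < r then w i j else 0) = (\<Sum>j<D. if j < r then \<Sum>i<D. w i j else 0)"
      by (subst sum.swap) (rule sum.cong, auto)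
    also have "\<dots> = (\<Sum>j<r. \<Sum>i<D. w i j)"
      using r by (rule sum_lessThan_if_less)
    also have "\<dots> \<le> (\<Sum>j<r. W)"
      using cols by (intro sum_mono)
    finally show ?thesis
      by simp
  qed
  have "(\<Sum>i<D. \<Sum>j<D. if i < r \<or> j < r then w i j else 0)
      \<le> (\<Sum>i<D. \<Sum>j<D. (if i < r then w i j else 0) + (if j < r then w i j else 0))"
    using nonneg by (intro sum_mono) auto
  also have "\<dots> = (\<Sum>i<D. \<Sum>j<D. if i < r then w i j else 0) + (\<Sum>i<D. \<Sum>j<D. if j < r then w i j else 0)"
    by (simp add: sum.distrib)
  finally show ?thesis
    using row_part col_part by simp
qed

lemma sum_sq_trunc_entries_le:
  fixes s t :: "nat \<Rightarrow> real" and a b e f :: "nat \<Rightarrow> nat \<Rightarrow> real"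
  assumes e: "\<And>i j. t i * b i j - s j * a i j = e i j"
    and f: "\<And>i j. t i * a i j - s j * b i j = f i j"
    and nonneg: "\<And>i. 0 \<le> s i" "\<And>i. 0 \<le> t i"
    and sep: "\<And>i j. (i < r) \<noteq> (j < r) \<Longrightarrow> s j \<le> L * \<bar>t i - s j\<bar>"
    and rows: "\<And>i. (\<Sum>j<D. (e i j)^2 + (f i j)^2) \<le> W"
    and cols: "\<And>j. (\<Sum>i<D. (e i j)^2 + (f i j)^2) \<le> W"
    and r: "r \<le> D"
  shows "(\<Sum>i<D. \<Sum>j<D. ((if i < r then t i else 0) * b i j - (if j < r then s j else 0) * a i j)^2)
    \<le> 2 * real r * W * (2 + 2 * L^2)"
proof -
  have "(\<Sum>i<D. \<Sum>j<D. ((if i < r then t i else 0) * b i j - (if j < r then s j else 0) * a i j)^2)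
      \<le> (\<Sum>i<D. \<Sum>j<D. (2 + 2 * L^2) * (if i < r \<or> j < r then (e i j)^2 + (f i j)^2 else 0))"
  proof (intro sum_mono)
    fix i j
    show "((if i < r then t i else 0) * b i j - (if j < r then s j else 0) * a i j)^2
      \<le> (2 + 2 * L^2) * (if i < r \<or> j < r then (e i j)^2 + (f i j)^2 else 0)"
      using trunc_entry_sq_le[where P = "i < r" and Q = "j < r", OF e[of i j] f[of i j] nonneg(2,1) sep[of i j]]
      by (cases "i < r \<or> j < r") simp_all
  qed
  also have "\<dots> = (2 + 2 * L^2) * (\<Sum>i<D. \<Sum>j<D. if i < r \<or> j < r then (e i j)^2 + (f i j)^2 else 0)"
    by (simp add: sum_distrib_left)
  also have "\<dots> \<le> (2 + 2 * L^2) * (2 * real r * W)"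
    using rows cols r by (intro mult_left_mono sum_first_rows_or_cols_le) auto
  finally show ?thesis
    by (simp add: mult_ac)
qed

lemma weyl_gap_separation:
  fixes s t :: "nat \<Rightarrow> real"
  assumes s: "antimono s" "0 \<le> s (Suc k)" and t: "antimono t"
    and gap: "s (Suc k) < s k" and small: "\<epsilon> \<le> (s k - s (Suc k)) / 2"
    and lower: "s k \<le> t k + \<epsilon>" and upper: "t (Suc k) \<le> s (Suc k) + \<epsilon>"
    and ij: "(i < Suc k) \<noteq> (j < Suc k)"
  shows "s j \<le> (2 + 2 * (s (Suc k) / (s k - s (Suc k)))) * \<bar>t i - s j\<bar>"
proof -
  define \<delta> where "\<delta> = s k - s (Suc k)"
  define K where "K = s (Suc k) / \<delta>"
  have \<delta>: "0 < \<delta>"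
    using gap by (simp add: \<delta>_def)
  have K: "0 \<le> K" "K * \<delta> = s (Suc k)"
    using s(2) \<delta> by (simp_all add: K_def)
  show ?thesis
  proof (cases "i < Suc k")
    case True
    then have "j \<ge> Suc k"
      using ij by simp
    then have "s j \<le> s (Suc k)" "t k \<le> t i"
      using True antimonoD[OF s(1), of "Suc k" j] antimonoD[OF t, of i k] by simp_all
    then have h: "\<delta> \<le> 2 * (t i - s j)"
      using lower small by (simp add: \<delta>_def)
    have "s j \<le> K * \<delta>"
      using \<open>s j \<le> s (Suc k)\<close> K by simp
    also have "\<dots> \<le> K * (2 * (t i - s j))"
      using h K by (intro mult_left_mono) auto
    also have "\<dots> \<le> (2 + 2 * K) * \<bar>t i - s j\<bar>"
      using h \<delta> K by (simp add: algebra_simps)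
    finally show ?thesis
      by (simp add: K_def \<delta>_def)
  next
    case False
    then have "j < Suc k"
      using ij by simp
    then have "s k \<le> s j" "t i \<le> t (Suc k)"
      using False antimonoD[OF s(1), of j k] antimonoD[OF t, of "Suc k" i] by simp_all
    then have h: "\<delta> \<le> 2 * (s j - t i)"
      using upper small by (simp add: \<delta>_def)
    have "s j \<le> (s j - t i) + K * \<delta> + \<delta> / 2"
      using \<open>t i \<le> t (Suc k)\<close> upper small K(2) unfolding \<delta>_def by linarith
    also have "\<dots> \<le> (s j - t i) + K * (2 * (s j - t i)) + (s j - t i)"
      using h K by (intro add_mono mult_left_mono) auto
    also have "\<dots> = (2 + 2 * K) * \<bar>t i - s j\<bar>"
      using h \<delta> by (simp add: algebra_simps)
    finally show ?thesis
      by (simp add: K_def \<delta>_def)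
  qed
qed

lemma diag_entry_gap_imp_less_min:
  assumes "S \<in> carrier_mat d1 d2" "diag_entry S (Suc k) < diag_entry S k"
  shows "k < min d1 d2"
  using assms by (cases "k < min d1 d2") (auto simp: diag_entry_def)

lemma svd_perturbation_separation:
  assumes A: "is_svd d1 d2 A U S V" and B: "is_svd d1 d2 (A + E) U' S' V'"
    and E: "E \<in> carrier_mat d1 d2"
    and gap: "diag_entry S (Suc k) < diag_entry S k"
    and small: "spec_norm E \<le> (diag_entry S k - diag_entry S (Suc k)) / 2"
    and ij: "(i < Suc k) \<noteq> (j < Suc k)"
  shows "diag_entry S j
    \<le> (2 + 2 * (diag_entry S (Suc k) / (diag_entry S k - diag_entry S (Suc k))))
      * \<bar>diag_entry S' i - diag_entry S j\<bar>"
proof -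
  have Sc: "S \<in> carrier_mat d1 d2" and S'c: "S' \<in> carrier_mat d1 d2"
    using A B unfolding is_svd_def by auto
  have k: "k < min d1 d2"
    using Sc gap by (rule diag_entry_gap_imp_less_min)
  have lower: "diag_entry S k \<le> diag_entry S' k + spec_norm E"
    using weyl_perturbation[OF A B E k] by simp
  have upper: "diag_entry S' (Suc k) \<le> diag_entry S (Suc k) + spec_norm E"
  proof (cases "Suc k < min d1 d2")
    case True
    then show ?thesis
      using weyl_perturbation[OF A B E True] by simp
  next
    case False
    then have "diag_entry S' (Suc k) = 0"
      using S'c by (auto simp: diag_entry_def)
    then show ?thesis
      using is_svd_diag_entry_nonneg[OF A] spec_norm_nonneg[of E] by simp
  qed
  show ?thesis
    using is_svd_diag_entry_antimono[OF A] is_svd_diag_entry_nonneg[OF A]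
      is_svd_diag_entry_antimono[OF B] gap small lower upper ij
    by (rule weyl_gap_separation)
qed

lemma trunc_svd_perturbation_frob_le:
  assumes A: "is_svd d1 d2 A U S V" and B: "is_svd d1 d2 (A + E) U' S' V'"
    and E: "E \<in> carrier_mat d1 d2"
    and gap: "diag_entry S (Suc k) < diag_entry S k"
    and small: "spec_norm E \<le> (diag_entry S k - diag_entry S (Suc k)) / 2"
  shows "frob_norm (U' * trunc_diag (Suc k) S' * transpose_mat V' - U * trunc_diag (Suc k) S * transpose_mat V)
    \<le> 7 * sqrt (Suc k) * spec_norm E * (1 + diag_entry S (Suc k) / (diag_entry S k - diag_entry S (Suc k)))"
    (is "frob_norm ?X \<le> _")
proof -
  define s where "s = diag_entry S"
  define t where "t = diag_entry S'"
  define \<epsilon> where "\<epsilon> = spec_norm E"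
  define K where "K = s (Suc k) / (s k - s (Suc k))"
  define D where "D = max d1 d2"
  have U: "orth_mat d1 U" and V: "orth_mat d2 V" and U': "orth_mat d1 U'" and V': "orth_mat d2 V'"
    and Sc: "S \<in> carrier_mat d1 d2"
    using A B unfolding is_svd_def by auto
  have \<epsilon>: "0 \<le> \<epsilon>"
    by (simp add: \<epsilon>_def spec_norm_nonneg)
  have K: "0 \<le> K"
    using gap is_svd_diag_entry_nonneg[OF A] by (simp add: K_def s_def)
  have D: "d1 \<le> D" "d2 \<le> D" "Suc k \<le> D"
    using diag_entry_gap_imp_less_min[OF Sc gap] by (auto simp: D_def)
  have rows: "(\<Sum>j<D. (basis_coeff U' V E i j)^2 + (basis_coeff U V' E j i)^2) \<le> 2 * \<epsilon>^2" for i
    using sum_sq_basis_coeff_le(2)[OF U' V E D(1,2), of i] sum_sq_basis_coeff_le(1)[OF U V' E D(1,2), of i]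
    by (simp add: sum.distrib \<epsilon>_def)
  have cols: "(\<Sum>i<D. (basis_coeff U' V E i j)^2 + (basis_coeff U V' E j i)^2) \<le> 2 * \<epsilon>^2" for j
    using sum_sq_basis_coeff_le(1)[OF U' V E D(1,2), of j] sum_sq_basis_coeff_le(2)[OF U V' E D(1,2), of j]
    by (simp add: sum.distrib \<epsilon>_def)
  have "U * trunc_diag (Suc k) S * transpose_mat V \<in> carrier_mat d1 d2"
    using orth_mat_carrier[OF U] orth_mat_carrier[OF V] trunc_diag_carrier[OF Sc] by auto
  then have "?X \<in> carrier_mat d1 d2"
    by (rule minus_carrier_mat)
  then have "(frob_norm ?X)^2 = (\<Sum>i<D. \<Sum>j<D. (basis_coeff U' V ?X i j)^2)"
    using U' V D(1,2) by (rule frob_norm_sq_eq_sum_basis_coeff)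
  also have "\<dots> = (\<Sum>i<D. \<Sum>j<D. ((if i < Suc k then t i else 0) * (col_pad V' i \<bullet> col_pad V j)
      - (if j < Suc k then s j else 0) * (col_pad U' i \<bullet> col_pad U j))^2)"
    unfolding s_def t_def basis_coeff_trunc_diff[OF A B] ..
  also have "\<dots> \<le> 2 * real (Suc k) * (2 * \<epsilon>^2) * (2 + 2 * (2 + 2 * K)^2)"
  proof (rule sum_sq_trunc_entries_le[where e = "\<lambda>i j. basis_coeff U' V E i j"
        and f = "\<lambda>i j. basis_coeff U V' E j i"])
    show "t i * (col_pad V' i \<bullet> col_pad V j) - s j * (col_pad U' i \<bullet> col_pad U j) = basis_coeff U' V E i j"
      and "t i * (col_pad U' i \<bullet> col_pad U j) - s j * (col_pad V' i \<bullet> col_pad V j) = basis_coeff U V' E j i"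
      for i j
      unfolding s_def t_def by (rule svd_perturbation_coupling[OF A B E])+
    show "s j \<le> (2 + 2 * K) * \<bar>t i - s j\<bar>" if "(i < Suc k) \<noteq> (j < Suc k)" for i j
      unfolding s_def t_def K_def using A B E gap small that by (rule svd_perturbation_separation)
  qed (use is_svd_diag_entry_nonneg[OF A] is_svd_diag_entry_nonneg[OF B] rows cols D(3)
      in \<open>simp_all add: s_def t_def\<close>)
  also have "\<dots> = real (Suc k) * \<epsilon>^2 * (8 + 32 * (1 + K)^2)"
    by (simp add: power2_eq_square algebra_simps)
  also have "\<dots> \<le> real (Suc k) * \<epsilon>^2 * (49 * (1 + K)^2)"
  proof -
    have "1 \<le> (1 + K)^2"
      using K by (intro one_le_power) simp
    then show ?thesis
      by (intro mult_left_mono) simp_all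
  qed
  also have "\<dots> = (7 * sqrt (Suc k) * \<epsilon> * (1 + K))^2"
    by (simp add: power_mult_distrib)
  finally have "frob_norm ?X \<le> 7 * sqrt (Suc k) * \<epsilon> * (1 + K)"
    by (rule power2_le_imp_le) (use \<epsilon> K in simp)
  then show ?thesis
    by (simp add: \<epsilon>_def K_def s_def)
qed

theorem lemma1:
  shows "\<exists>C0 :: real. C0 > 0 \<and>
    (\<forall>(d1::nat) (d2::nat) (A::real mat) (E::real mat) (r::nat) Ar Br.
       A \<in> carrier_mat d1 d2 \<longrightarrow> E \<in> carrier_mat d1 d2 \<longrightarrow>
       1 \<le> r \<longrightarrow> r < max d1 d2 \<longrightarrow>
       sing_val A r > sing_val A (r + 1) \<longrightarrow>
       spec_norm E \<le> (sing_val A r - sing_val A (r + 1)) / 2 \<longrightarrow>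
       is_rank_trunc A r Ar \<longrightarrow> is_rank_trunc (A + E) r Br \<longrightarrow>
       frob_norm (Br - Ar) \<le> C0 * sqrt (real r) * spec_norm E *
         (1 + sqrt (sing_val A (r + 1) * sing_val A 1) / (sing_val A r - sing_val A (r + 1))))"
proof (intro exI[of _ 7] conjI allI impI)
  fix d1 d2 :: nat and A E :: "real mat" and r :: nat and Ar Br
  assume A: "A \<in> carrier_mat d1 d2" and E: "E \<in> carrier_mat d1 d2" and r: "1 \<le> r"
    and "r < max d1 d2" \<comment> \<open>not needed\<close>
    and gap: "sing_val A r > sing_val A (r + 1)"
    and small: "spec_norm E \<le> (sing_val A r - sing_val A (r + 1)) / 2"
    and Ar: "is_rank_trunc A r Ar" and Br: "is_rank_trunc (A + E) r Br"
  obtain k where k: "r = Suc k"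
    using r by (cases r) auto
  obtain U S V where svd_A: "is_svd d1 d2 A U S V" and Ar_eq: "Ar = U * trunc_diag r S * transpose_mat V"
    using Ar A unfolding is_rank_trunc_def by auto
  obtain U' S' V' where svd_B: "is_svd d1 d2 (A + E) U' S' V'"
    and Br_eq: "Br = U' * trunc_diag r S' * transpose_mat V'"
    using Br A E unfolding is_rank_trunc_def by auto
  define s where "s = diag_entry S"
  have sv: "sing_val A r = s k" "sing_val A (r + 1) = s (Suc k)" "sing_val A 1 = s 0"
    using sing_val_eq_diag_entry[OF svd_A, of k] sing_val_eq_diag_entry[OF svd_A, of "Suc k"]
      sing_val_eq_diag_entry[OF svd_A, of 0]
    by (simp_all add: s_def k)
  have gap': "s (Suc k) < s k" and small': "spec_norm E \<le> (s k - s (Suc k)) / 2"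
    using gap small unfolding sv by simp_all
  have sqrt_bound: "s (Suc k) \<le> sqrt (s (Suc k) * s 0)"
    using is_svd_diag_entry_nonneg[OF svd_A] antimonoD[OF is_svd_diag_entry_antimono[OF svd_A], of 0 "Suc k"]
    by (intro real_le_rsqrt) (simp add: s_def power2_eq_square mult_left_mono)
  have "frob_norm (Br - Ar) \<le> 7 * sqrt r * spec_norm E * (1 + s (Suc k) / (s k - s (Suc k)))"
    unfolding Ar_eq Br_eq k s_def
    using gap' small' unfolding s_def by (rule trunc_svd_perturbation_frob_le[OF svd_A svd_B E])
  also have "\<dots> \<le> 7 * sqrt r * spec_norm E * (1 + sqrt (s (Suc k) * s 0) / (s k - s (Suc k)))"
    using sqrt_bound gap' spec_norm_nonneg[of E]
    by (intro mult_left_mono add_left_mono divide_right_mono) simp_all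
  finally show "frob_norm (Br - Ar) \<le> 7 * sqrt (real r) * spec_norm E *
      (1 + sqrt (sing_val A (r + 1) * sing_val A 1) / (sing_val A r - sing_val A (r + 1)))"
    unfolding sv .
qed simp

end
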